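(* Let $\varphi=(\varphi_1,\varphi_2)$ be a solution of the system $(S_1^0)$ on $(0,\infty)$. (i) If $\varphi_1(r),\varphi_2(r)\to0$ as $r\to0^+$ and $\varphi_1(r),\varphi_2(r)>0$ for all sufficiently small $r>0$, then $\varphi_1(r)>0$ and $\varphi_2(r)>0$ for all $r\in(0,\infty)$. (ii) If $\varphi_1(r),\varphi_2(r)\to0$ as $r\to\infty$ and $\varphi_1(r),\varphi_2(r)>0$ for all sufficiently large $r$, then $\varphi_1(r)>0$ and $\varphi_2(r)>0$ for all $r\in(0,\infty)$.
   Context: Let $w:[0,\infty)\to\mathbb{R}$ be the unique solution of $w''+\frac1r w'-\frac1{r^2}w+(1-w^2)w=0$ on $(0,\infty)$ with $w(0)=0$ and $w(r)\to1$ as $r\to\infty$; it satisfies $0<w<1$ and $w'>0$ on $(0,\infty)$. The system $(S_1^0)$ is, for $\varphi=(\varphi_1,\varphi_2)$ real-valued, $$\varphi''+\Big(2\frac{w'}{w}+\frac1r\Big)\varphi'-\frac1{r^2}\begin{pmatrix}1&2\\2&1+2w^2r^2\end{pmatrix}\varphi=0.$$ *)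

theory Defs
  imports "HOL-Analysis.Analysis"
begin

text \<open>The profile w: solution on (0,inf) of
  w'' + w'/r - w/r^2 + (1 - w^2) w = 0 with w(0) = 0 and w(r) -> 1 as r -> inf.
  w is continuous on [0,inf); w' and w'' are its derivatives on (0,inf).
  The facts 0 < w < 1 and w' > 0 on (0,inf), stated in the context, are included.\<close>
definition vortex_profile :: "(real \<Rightarrow> real) \<Rightarrow> (real \<Rightarrow> real) \<Rightarrow> (real \<Rightarrow> real) \<Rightarrow> bool" where
  "vortex_profile w w' w'' \<longleftrightarrow>
     continuous_on {0..} w \<and> w 0 = 0 \<and> (w \<longlongrightarrow> 1) at_top \<and>
     (\<forall>r>0. (w has_real_derivative w' r) (at r) \<and> (w' has_real_derivative w'' r) (at r) \<and>
            w'' r + w' r / r - w r / r^2 + (1 - (w r)^2) * w r = 0 \<and>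
            0 < w r \<and> w r < 1 \<and> 0 < w' r)"

definition solves_S10 ::
  "(real \<Rightarrow> real) \<Rightarrow> (real \<Rightarrow> real) \<Rightarrow>
   (real \<Rightarrow> real) \<Rightarrow> (real \<Rightarrow> real) \<Rightarrow> (real \<Rightarrow> real) \<Rightarrow> (real \<Rightarrow> real) \<Rightarrow> (real \<Rightarrow> real) \<Rightarrow> (real \<Rightarrow> real) \<Rightarrow> bool" where
  "solves_S10 w w' p1 p1' p1'' p2 p2' p2'' \<longleftrightarrow>
     (\<forall>r>0. (p1 has_real_derivative p1' r) (at r) \<and> (p1' has_real_derivative p1'' r) (at r) \<and>
            (p2 has_real_derivative p2' r) (at r) \<and> (p2' has_real_derivative p2'' r) (at r) \<and>
            p1'' r + (2 * w' r / w r + 1 / r) * p1' r - (p1 r + 2 * p2 r) / r^2 = 0 \<and>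
            p2'' r + (2 * w' r / w r + 1 / r) * p2' r
              - (2 * p1 r + (1 + 2 * (w r)^2 * r^2) * p2 r) / r^2 = 0)"

end

theory Submission
  imports Defs
begin

text \<open>Each equation of the system can be written in divergence form
  \<open>(r w\<^sup>2 \<phi>\<^sub>i')' = w\<^sup>2 (A\<phi>)\<^sub>i / r\<close>, and both components of \<open>A\<phi>\<close> are positive wherever
  \<open>\<phi>\<^sub>1, \<phi>\<^sub>2 > 0\<close>. On an interval where both components are positive the fluxes
  \<open>r w\<^sup>2 \<phi>\<^sub>i'\<close> therefore increase, so \<open>\<phi>\<^sub>i'\<close> cannot change sign from \<open>+\<close> to \<open>-\<close>
  and neither component has a strict interior maximum. If positivity failed somewhere,
  take the zero of \<open>min \<phi>\<^sub>1 \<phi>\<^sub>2\<close> closest to the end where \<open>\<phi> \<rightarrow> 0\<close>: some \<open>\<phi>\<^sub>i\<close> is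
  \<open>\<le> 0\<close> there, tends to \<open>0\<close> at the other end and is positive in between, so it
  would attain such a maximum.\<close>

lemma no_interior_max_if_flux_increasing:
  fixes f f' \<rho> G' :: "real \<Rightarrow> real"
  assumes "x < s" "s < y"
    and f_deriv: "\<And>r. x \<le> r \<Longrightarrow> r \<le> y \<Longrightarrow> (f has_real_derivative f' r) (at r)"
    and flux_deriv: "\<And>r. x < r \<Longrightarrow> r < y \<Longrightarrow>
                       ((\<lambda>r. \<rho> r * f' r) has_real_derivative G' r) (at r) \<and> G' r > 0"
    and weight_pos: "\<And>r. x < r \<Longrightarrow> r < y \<Longrightarrow> \<rho> r > 0"
  shows "f s \<le> f x \<or> f s \<le> f y"
proof (rule ccontr)
  assume "\<not> ?thesis"
  hence max: "f x < f s" "f y < f s" by auto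
  obtain a where a: "x < a" "a < s" "f s - f x = (s - x) * f' a"
    using MVT2[of x s f f'] assms(1,2) f_deriv by force
  obtain b where b: "s < b" "b < y" "f y - f s = (y - s) * f' b"
    using MVT2[of s y f f'] assms(1,2) f_deriv by force
  have "0 < (s - x) * f' a" "(y - s) * f' b < 0"
    using a(3) b(3) max by linarith+
  hence "f' a > 0" "f' b < 0"
    using a b by (simp_all add: zero_less_mult_iff mult_less_0_iff)
  with a b weight_pos have "\<rho> a * f' a > 0" "\<rho> b * f' b < 0"
    by (simp_all add: mult_pos_neg)
  moreover have "\<rho> a * f' a < \<rho> b * f' b"
  proof (rule DERIV_pos_imp_increasing[where f = "\<lambda>r. \<rho> r * f' r"])
    show "a < b" using a b by simp
  next
    fix t assume "a \<le> t" "t \<le> b"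
    then show "\<exists>z. ((\<lambda>r. \<rho> r * f' r) has_real_derivative z) (at t) \<and> z > 0"
      using flux_deriv[of t] a b by auto
  qed
  ultimately show False by simp
qed

lemma divergence_form_derivative:
  fixes w w' f' f'' h :: "real \<Rightarrow> real"
  assumes "r > 0" "w r > 0"
    and "(w has_real_derivative w' r) (at r)"
    and "(f' has_real_derivative f'' r) (at r)"
    and ode: "f'' r + (2 * w' r / w r + 1 / r) * f' r - h r / r^2 = 0"
  shows "((\<lambda>r. r * (w r)^2 * f' r) has_real_derivative (w r)^2 * h r / r) (at r)"
proof -
  have f'': "f'' r = h r / r^2 - (2 * w' r / w r + 1 / r) * f' r"
    using ode by simp
  have "((\<lambda>r. r * (w r)^2 * f' r) has_real_derivative
          (1 * (w r)^2 + r * (2 * w r * w' r)) * f' r + r * (w r)^2 * f'' r) (at r)"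
    by (auto intro!: derivative_eq_intros assms)
  moreover have "(1 * (w r)^2 + r * (2 * w r * w' r)) * f' r + r * (w r)^2 * f'' r = (w r)^2 * h r / r"
    unfolding f'' using assms(1,2) by (simp add: field_simps power2_eq_square)
  ultimately show ?thesis by simp
qed

lemma least_nonpos_point:
  fixes m :: "real \<Rightarrow> real"
  assumes "continuous_on {a..b} m" "a \<le> b" "m b \<le> 0"
  obtains r0 where "a \<le> r0" "r0 \<le> b" "m r0 \<le> 0" "\<And>r. a \<le> r \<Longrightarrow> r < r0 \<Longrightarrow> m r > 0"
proof -
  define Z where "Z = {a..b} \<inter> m -` {..0}"
  have "closed Z"
    unfolding Z_def using assms(1) by (intro continuous_closed_preimage) auto
  moreover have "bdd_below Z" "Z \<noteq> {}"
    using assms(2,3) by (auto simp: Z_def)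
  ultimately have "Inf Z \<in> Z"
    by (intro closed_contains_Inf)
  moreover have "m r > 0" if "a \<le> r" "r < Inf Z" for r
    using cInf_lower[OF _ \<open>bdd_below Z\<close>, of r] that \<open>Inf Z \<in> Z\<close> by (force simp: Z_def)
  ultimately show thesis
    using that by (auto simp: Z_def)
qed

lemma greatest_nonpos_point:
  fixes m :: "real \<Rightarrow> real"
  assumes "continuous_on {a..b} m" "a \<le> b" "m a \<le> 0"
  obtains r0 where "a \<le> r0" "r0 \<le> b" "m r0 \<le> 0" "\<And>r. r0 < r \<Longrightarrow> r \<le> b \<Longrightarrow> m r > 0"
proof -
  define Z where "Z = {a..b} \<inter> m -` {..0}"
  have "closed Z"
    unfolding Z_def using assms(1) by (intro continuous_closed_preimage) auto
  moreover have "bdd_above Z" "Z \<noteq> {}"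
    using assms(2,3) by (auto simp: Z_def)
  ultimately have "Sup Z \<in> Z"
    by (intro closed_contains_Sup)
  moreover have "m r > 0" if "Sup Z < r" "r \<le> b" for r
    using cSup_upper[OF _ \<open>bdd_above Z\<close>, of r] that \<open>Sup Z \<in> Z\<close> by (force simp: Z_def)
  ultimately show thesis
    using that by (auto simp: Z_def)
qed

context
  fixes w w' w'' p1 p1' p1'' p2 p2' p2'' :: "real \<Rightarrow> real"
  assumes profile: "vortex_profile w w' w''"
    and solution: "solves_S10 w w' p1 p1' p1'' p2 p2' p2''"
begin

lemma no_interior_max_where_positive:
  assumes "0 < x" "x < s" "s < y"
    and pos: "\<And>r. x < r \<Longrightarrow> r < y \<Longrightarrow> p1 r > 0 \<and> p2 r > 0"
  shows "p1 s \<le> p1 x \<or> p1 s \<le> p1 y" "p2 s \<le> p2 x \<or> p2 s \<le> p2 y"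
proof -
  have w: "w r > 0" "(w has_real_derivative w' r) (at r)" if "r > 0" for r
    using profile that unfolding vortex_profile_def by auto
  have weight_pos: "r * (w r)^2 > 0" if "r > 0" for r
    using w(1)[OF that] that by simp
  note eqs = solution[unfolded solves_S10_def, rule_format]
  show "p1 s \<le> p1 x \<or> p1 s \<le> p1 y"
  proof (rule no_interior_max_if_flux_increasing[where f = p1 and f' = p1' and \<rho> = "\<lambda>r. r * (w r)^2"])
    fix r assume r: "x < r" "r < y"
    with \<open>0 < x\<close> have "r > 0" by simp
    have "0 < p1 r + 2 * p2 r"
      using pos[OF r] by simp
    then show "((\<lambda>r. r * (w r)^2 * p1' r) has_real_derivative (w r)^2 * (p1 r + 2 * p2 r) / r) (at r)
          \<and> (w r)^2 * (p1 r + 2 * p2 r) / r > 0"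
      using divergence_form_derivative[of r w w' p1' p1'' "\<lambda>r. p1 r + 2 * p2 r"]
        w[OF \<open>r > 0\<close>] eqs[OF \<open>r > 0\<close>] \<open>r > 0\<close> by simp
  qed (use assms eqs weight_pos in auto)
  show "p2 s \<le> p2 x \<or> p2 s \<le> p2 y"
  proof (rule no_interior_max_if_flux_increasing[where f = p2 and f' = p2' and \<rho> = "\<lambda>r. r * (w r)^2"])
    fix r assume r: "x < r" "r < y"
    with \<open>0 < x\<close> have "r > 0" by simp
    have "0 < 2 * p1 r + (1 + 2 * (w r)^2 * r^2) * p2 r"
      using pos[OF r] by (simp add: add_pos_nonneg)
    then show "((\<lambda>r. r * (w r)^2 * p2' r) has_real_derivative
                 (w r)^2 * (2 * p1 r + (1 + 2 * (w r)^2 * r^2) * p2 r) / r) (at r)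
          \<and> (w r)^2 * (2 * p1 r + (1 + 2 * (w r)^2 * r^2) * p2 r) / r > 0"
      using divergence_form_derivative[of r w w' p2' p2'' "\<lambda>r. 2 * p1 r + (1 + 2 * (w r)^2 * r^2) * p2 r"]
        w[OF \<open>r > 0\<close>] eqs[OF \<open>r > 0\<close>] \<open>r > 0\<close> by simp
  qed (use assms eqs weight_pos in auto)
qed

lemma continuous_on_min_components:
  assumes "0 < a"
  shows "continuous_on {a..b} (\<lambda>r. min (p1 r) (p2 r))"
proof -
  have "isCont p1 r" "isCont p2 r" if "r > 0" for r
    using solution that unfolding solves_S10_def by (auto intro: DERIV_isCont)
  then show ?thesis
    using assms by (intro continuous_on_min continuous_at_imp_continuous_on) auto
qed

lemma positive_if_positive_near_zero:
  assumes lim: "(p1 \<longlongrightarrow> 0) (at_right 0)" "(p2 \<longlongrightarrow> 0) (at_right 0)"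
    and near_zero: "\<forall>\<^sub>F r in at_right 0. p1 r > 0 \<and> p2 r > 0"
  shows "\<forall>r>0. p1 r > 0 \<and> p2 r > 0"
proof (rule ccontr)
  assume "\<not> ?thesis"
  then obtain b where b: "b > 0" "min (p1 b) (p2 b) \<le> 0" by force
  obtain \<delta> where \<delta>: "\<delta> > 0" "\<And>r. 0 < r \<Longrightarrow> r < \<delta> \<Longrightarrow> p1 r > 0 \<and> p2 r > 0"
    using near_zero unfolding eventually_at_right_field by auto
  with b have "\<delta> / 2 \<le> b" by force
  then obtain r0 where r0: "\<delta> / 2 \<le> r0" "min (p1 r0) (p2 r0) \<le> 0"
    and pos_above: "\<And>r. \<delta> / 2 \<le> r \<Longrightarrow> r < r0 \<Longrightarrow> min (p1 r) (p2 r) > 0"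
    using least_nonpos_point[OF continuous_on_min_components] \<delta>(1) b(2) by (metis half_gt_zero)
  have pos: "p1 r > 0 \<and> p2 r > 0" if "0 < r" "r < r0" for r
    using \<delta>(2)[of r] pos_above[of r] that by (cases "r < \<delta> / 2") auto
  define s where "s = r0 / 2"
  have s: "0 < s" "s < r0" "p1 s > 0" "p2 s > 0"
    using pos[of s] r0(1) \<delta>(1) by (auto simp: s_def)
  have "\<forall>\<^sub>F r in at_right 0. r \<in> {0<..<s} \<and> p1 r < p1 s \<and> p2 r < p2 s"
    using eventually_at_rightI[of 0 s "\<lambda>r. r \<in> {0<..<s}"] order_tendstoD(2)[OF lim(1) s(3)]
      order_tendstoD(2)[OF lim(2) s(4)] s(1) by (intro eventually_conj) auto
  then obtain x where x: "0 < x" "x < s" "p1 x < p1 s" "p2 x < p2 s"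
    using eventually_happens'[OF trivial_limit_at_right_real] by auto
  show False
    using no_interior_max_where_positive[OF x(1,2) s(2) pos] x r0(2) s by linarith
qed

lemma positive_if_positive_near_infinity:
  assumes lim: "(p1 \<longlongrightarrow> 0) at_top" "(p2 \<longlongrightarrow> 0) at_top"
    and near_infinity: "\<forall>\<^sub>F r in at_top. p1 r > 0 \<and> p2 r > 0"
  shows "\<forall>r>0. p1 r > 0 \<and> p2 r > 0"
proof (rule ccontr)
  assume "\<not> ?thesis"
  then obtain a where a: "a > 0" "min (p1 a) (p2 a) \<le> 0" by force
  obtain T where T: "\<And>r. T \<le> r \<Longrightarrow> p1 r > 0 \<and> p2 r > 0"
    using near_infinity unfolding eventually_at_top_linorder by auto
  have "a \<le> T"
    using T[of a] a(2) by (cases "T \<le> a") auto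
  then obtain r0 where r0: "a \<le> r0" "min (p1 r0) (p2 r0) \<le> 0"
    and pos_below: "\<And>r. r0 < r \<Longrightarrow> r \<le> T \<Longrightarrow> min (p1 r) (p2 r) > 0"
    using greatest_nonpos_point[OF continuous_on_min_components] a by metis
  have pos: "p1 r > 0 \<and> p2 r > 0" if "r0 < r" for r
    using T[of r] pos_below[of r] that by (cases "r \<le> T") auto
  define s where "s = r0 + 1"
  have s: "r0 < s" "p1 s > 0" "p2 s > 0"
    using pos[of s] by (auto simp: s_def)
  have "\<forall>\<^sub>F r in at_top. s < r \<and> p1 r < p1 s \<and> p2 r < p2 s"
    using eventually_gt_at_top[of s] order_tendstoD(2)[OF lim(1) s(2)] order_tendstoD(2)[OF lim(2) s(3)]
    by (intro eventually_conj)
  then obtain y where y: "s < y" "p1 y < p1 s" "p2 y < p2 s"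
    using eventually_happens'[OF trivial_limit_at_top_linorder] by blast
  show False
    using no_interior_max_where_positive[OF _ s(1) y(1) pos] a r0 y s by linarith
qed

end

theorem lemma3p7:
  fixes w w' w'' p1 p1' p1'' p2 p2' p2'' :: "real \<Rightarrow> real"
  assumes "vortex_profile w w' w''"
    and "solves_S10 w w' p1 p1' p1'' p2 p2' p2''"
  shows "((p1 \<longlongrightarrow> 0) (at_right 0) \<and> (p2 \<longlongrightarrow> 0) (at_right 0) \<and>
          (\<forall>\<^sub>F r in at_right 0. p1 r > 0 \<and> p2 r > 0)
          \<longrightarrow> (\<forall>r>0. p1 r > 0 \<and> p2 r > 0))
       \<and> ((p1 \<longlongrightarrow> 0) at_top \<and> (p2 \<longlongrightarrow> 0) at_top \<and>
          (\<forall>\<^sub>F r in at_top. p1 r > 0 \<and> p2 r > 0)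
          \<longrightarrow> (\<forall>r>0. p1 r > 0 \<and> p2 r > 0))"
  using positive_if_positive_near_zero[OF assms] positive_if_positive_near_infinity[OF assms]
  by blast

end
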